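(* Let $T=(V,E)$ be a finite rooted tree, $\Pr$ a probability distribution over a finite set of queries, $u\in V$ and $v\in A(u)$ a proper ancestor of $u$. Then $$\mathbb{E}[I(u,v)]=\mathbb{E}[I(u,\emptyset)]-\mathbb{E}[I(v,\emptyset)].$$
   Context: $T=(V,E)$ is a finite rooted tree; $T(u)$ is the set of nodes of the subtree rooted at $u$; $A(u)$ the set of proper ancestors of $u$. Each non-leaf node is associated with a variable of a finite set $X$; $\mathrm{vars}(u)$ is the set of variables associated with nodes of $T(u)$. Each query $q$ determines $Z_q\subseteq X$. For $R\subseteq V$, $w\in V$: $I_q(w,R)=1$ iff $w\in R$, $\mathrm{vars}(w)\subseteq Z_q$, and no $x\in A(w)\cap R$ has $\mathrm{vars}(x)\subseteq Z_q$; else $0$; $\mathbb{E}[I(w,R)]=\sum_q\Pr(q)I_q(w,R)$. Notation: $\mathbb{E}[I(u,v)]:=\mathbb{E}[I(u,\{u,v\})]$ and $\mathbb{E}[I(w,\emptyset)]:=\mathbb{E}[I(w,\{w\})]$ (the expected usefulness of $w$ when it is the only selected node). *)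

theory Defs
  imports Complex_Main
begin

text \<open>A finite rooted tree on vertex set V with root r; E is the set of
  (parent, child) edges.\<close>
definition rooted_tree :: "'v set \<Rightarrow> ('v \<times> 'v) set \<Rightarrow> 'v \<Rightarrow> bool" where
  "rooted_tree V E r \<longleftrightarrow> finite V \<and> E \<subseteq> V \<times> V \<and> r \<in> V
     \<and> (\<forall>v\<in>V. (r, v) \<in> E\<^sup>*) \<and> (\<forall>p. (p, r) \<notin> E)
     \<and> (\<forall>v\<in>V - {r}. \<exists>!p. (p, v) \<in> E)"

definition subtree :: "('v \<times> 'v) set \<Rightarrow> 'v \<Rightarrow> 'v set" where
  "subtree E u = {w. (u, w) \<in> E\<^sup>*}"

definition anc :: "('v \<times> 'v) set \<Rightarrow> 'v \<Rightarrow> 'v set" where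
  "anc E u = {x. (x, u) \<in> E\<^sup>+}"

definition is_leaf :: "('v \<times> 'v) set \<Rightarrow> 'v \<Rightarrow> bool" where
  "is_leaf E w \<longleftrightarrow> (\<nexists>c. (w, c) \<in> E)"

definition vars :: "('v \<times> 'v) set \<Rightarrow> ('v \<Rightarrow> 'x) \<Rightarrow> 'v \<Rightarrow> 'x set" where
  "vars E lab u = lab ` {w \<in> subtree E u. \<not> is_leaf E w}"

definition Ind :: "('v \<times> 'v) set \<Rightarrow> ('v \<Rightarrow> 'x) \<Rightarrow> 'x set \<Rightarrow> 'v \<Rightarrow> 'v set \<Rightarrow> real" where
  "Ind E lab Zq w R =
     (if w \<in> R \<and> vars E lab w \<subseteq> Zq \<and> \<not> (\<exists>x \<in> anc E w \<inter> R. vars E lab x \<subseteq> Zq)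
      then 1 else 0)"

definition EI :: "'q set \<Rightarrow> ('q \<Rightarrow> real) \<Rightarrow> ('q \<Rightarrow> 'x set) \<Rightarrow> ('v \<times> 'v) set
                  \<Rightarrow> ('v \<Rightarrow> 'x) \<Rightarrow> 'v \<Rightarrow> 'v set \<Rightarrow> real" where
  "EI Q Pr Z E lab w R = (\<Sum>q\<in>Q. Pr q * Ind E lab (Z q) w R)"

end

theory Submission
  imports Defs
begin

text \<open>For a fixed query, u counts in {u, v} exactly when vars(u) \<subseteq> Z_q but vars(v) \<not>\<subseteq> Z_q;
  since vars(u) \<subseteq> vars(v), this indicator is the difference of the two singleton
  indicators. The only property of the tree
  needed is that no node is its own proper ancestor.\<close>

lemma rooted_tree_acyclic:
  assumes tree: "rooted_tree V E r" and w: "w \<in> V"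
  shows "(w, w) \<notin> E\<^sup>+"
proof -
  have EV: "E \<subseteq> V \<times> V" and no_parent_root: "\<forall>p. (p, r) \<notin> E"
    and unique_parent: "\<forall>v\<in>V - {r}. \<exists>!p. (p, v) \<in> E" and "(r, w) \<in> E\<^sup>*"
    using tree w unfolding rooted_tree_def by auto
  from \<open>(r, w) \<in> E\<^sup>*\<close> show ?thesis
  proof (induction w rule: rtrancl_induct)
    case base
    show ?case using no_parent_root by (meson tranclE)
  next
    case (step y z)
    show ?case
    proof
      assume "(z, z) \<in> E\<^sup>+"
      then obtain p where zp: "(z, p) \<in> E\<^sup>*" and pz: "(p, z) \<in> E"
        by (meson tranclD2)
      have "z \<in> V - {r}" using step.hyps(2) EV no_parent_root by blast
      then have "p = y" using unique_parent pz step.hyps(2) by blast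
      with zp step.hyps(2) have "(y, y) \<in> E\<^sup>+" by auto
      with step.IH show False ..
    qed
  qed
qed

lemma anc_not_self:
  assumes "rooted_tree V E r" and "w \<in> V"
  shows "w \<notin> anc E w"
  using rooted_tree_acyclic[OF assms] unfolding anc_def by simp

lemma anc_in_vertices:
  assumes "rooted_tree V E r" and "v \<in> anc E u"
  shows "v \<in> V"
proof -
  have "(v, u) \<in> E\<^sup>+" using assms(2) unfolding anc_def by simp
  then obtain c where "(v, c) \<in> E" by (cases rule: converse_tranclE) auto
  then show ?thesis using assms(1) unfolding rooted_tree_def by blast
qed

lemma vars_mono_anc:
  assumes "v \<in> anc E u"
  shows "vars E lab u \<subseteq> vars E lab v"
proof -
  have "(v, u) \<in> E\<^sup>*" using assms unfolding anc_def by simp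
  then have "subtree E u \<subseteq> subtree E v"
    unfolding subtree_def by (auto intro: rtrancl_trans)
  then show ?thesis unfolding vars_def by blast
qed

lemma Ind_anc_pair:
  assumes "u \<notin> anc E u" and "v \<notin> anc E v" and "v \<in> anc E u"
  shows "Ind E lab Zq u {u, v} = Ind E lab Zq u {u} - Ind E lab Zq v {v}"
proof -
  have "anc E u \<inter> {u, v} = {v}" "anc E u \<inter> {u} = {}" "anc E v \<inter> {v} = {}"
    using assms by blast+
  then show ?thesis
    unfolding Ind_def using vars_mono_anc[OF assms(3), of lab] by auto
qed

theorem lemma5:
  fixes V :: "'v set" and E :: "('v \<times> 'v) set" and r :: 'v
    and X :: "'x set" and lab :: "'v \<Rightarrow> 'x"
    and Q :: "'q set" and Pr :: "'q \<Rightarrow> real" and Z :: "'q \<Rightarrow> 'x set"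
    and u v :: 'v
  assumes tree: "rooted_tree V E r"
    and finX: "finite X" and labX: "\<forall>w\<in>V. \<not> is_leaf E w \<longrightarrow> lab w \<in> X"
    and finQ: "finite Q" and ZX: "\<forall>q\<in>Q. Z q \<subseteq> X"
    and Pr_nonneg: "\<forall>q\<in>Q. Pr q \<ge> 0" and Pr_sum: "(\<Sum>q\<in>Q. Pr q) = 1"
    and u: "u \<in> V" and v: "v \<in> anc E u"
  shows "EI Q Pr Z E lab u {u, v} = EI Q Pr Z E lab u {u} - EI Q Pr Z E lab v {v}"
proof -
  have "v \<in> V" using anc_in_vertices[OF tree v] .
  have "Ind E lab Zq u {u, v} = Ind E lab Zq u {u} - Ind E lab Zq v {v}" for Zq
    by (rule Ind_anc_pair[OF anc_not_self[OF tree u] anc_not_self[OF tree \<open>v \<in> V\<close>] v])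
  then show ?thesis
    unfolding EI_def by (simp add: right_diff_distrib sum_subtractf)
qed

end
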